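(* If $G$ is a $TR^{*}$-group, then the set $\mathrm{Tor}(G)$ of all torsion elements of $G$ is a normal subgroup of $G$.
   Context: For $g,x$ in a group, $g^{x}:=xgx^{-1}$. A non-trivial element $g$ of a group $G$ is a generalized torsion element if there exist a positive integer $n$ and $x_1,\ldots,x_n\in G$ with $g^{x_1}g^{x_2}\cdots g^{x_n}=1$. A group is a $TR^{*}$-group if every generalized torsion element of it is a torsion element. *)

theory Defs
  imports "HOL-Algebra.Algebra"
begin

definition conj_elem :: "('a, 'b) monoid_scheme \<Rightarrow> 'a \<Rightarrow> 'a \<Rightarrow> 'a" where
  "conj_elem G g x = x \<otimes>\<^bsub>G\<^esub> g \<otimes>\<^bsub>G\<^esub> inv\<^bsub>G\<^esub> x"

definition list_prod :: "('a, 'b) monoid_scheme \<Rightarrow> 'a list \<Rightarrow> 'a" where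
  "list_prod G xs = foldr (\<lambda>a b. a \<otimes>\<^bsub>G\<^esub> b) xs \<one>\<^bsub>G\<^esub>"

definition torsion_elem :: "('a, 'b) monoid_scheme \<Rightarrow> 'a \<Rightarrow> bool" where
  "torsion_elem G g \<longleftrightarrow> g \<in> carrier G \<and> (\<exists>n::nat. n > 0 \<and> g [^]\<^bsub>G\<^esub> n = \<one>\<^bsub>G\<^esub>)"

definition Tor :: "('a, 'b) monoid_scheme \<Rightarrow> 'a set" where
  "Tor G = {g. torsion_elem G g}"

definition gen_torsion_elem :: "('a, 'b) monoid_scheme \<Rightarrow> 'a \<Rightarrow> bool" where
  "gen_torsion_elem G g \<longleftrightarrow> g \<in> carrier G \<and> g \<noteq> \<one>\<^bsub>G\<^esub> \<and>
     (\<exists>xs. length xs > 0 \<and> set xs \<subseteq> carrier G \<and>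
        list_prod G (map (conj_elem G g) xs) = \<one>\<^bsub>G\<^esub>)"

definition TR_star_group :: "('a, 'b) monoid_scheme \<Rightarrow> bool" where
  "TR_star_group G \<longleftrightarrow> group G \<and> (\<forall>g. gen_torsion_elem G g \<longrightarrow> torsion_elem G g)"

end

theory Submission
  imports Defs
begin

text \<open>Torsion elements are closed under inverses and conjugation in any group; the point is
  closure under products. For all a, b and k there is the telescoping identity
    (ab)^(b^k) (ab)^(b^(k-1)) ... (ab)^b = b^k a^k,
  because in the product of the factors b^j a b b^(-j) and b^(j-1) a b b^(-(j-1)) the
  b b^(-j) b^(j-1) in the middle cancels. If a^m = b^n = 1, then k = mn makes the right-hand
  side 1, so ab is either 1 or a generalized torsion element, and in a TR*-group it is torsion.\<close>

lemma list_prod_Nil [simp]: "list_prod G [] = \<one>\<^bsub>G\<^esub>"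
  by (simp add: list_prod_def)

lemma list_prod_Cons [simp]: "list_prod G (x # xs) = x \<otimes>\<^bsub>G\<^esub> list_prod G xs"
  by (simp add: list_prod_def)

context group
begin

lemma inv_mult_cancel_left [simp]:
  "x \<in> carrier G \<Longrightarrow> y \<in> carrier G \<Longrightarrow> inv x \<otimes> (x \<otimes> y) = y"
  by (simp add: m_assoc[symmetric])

lemma mult_inv_cancel_left [simp]:
  "x \<in> carrier G \<Longrightarrow> y \<in> carrier G \<Longrightarrow> x \<otimes> (inv x \<otimes> y) = y"
  by (simp add: m_assoc[symmetric])

lemma conj_elem_nat_pow:
  assumes g: "g \<in> carrier G" and x: "x \<in> carrier G"
  shows "conj_elem G g x [^] (n::nat) = conj_elem G (g [^] n) x"
proof (induction n)
  case 0
  then show ?case using x by (simp add: conj_elem_def)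
next
  case (Suc n)
  have "conj_elem G g x [^] Suc n = (x \<otimes> g [^] n \<otimes> inv x) \<otimes> (x \<otimes> g \<otimes> inv x)"
    using Suc.IH by (simp add: conj_elem_def)
  also have "\<dots> = x \<otimes> (g [^] n \<otimes> (inv x \<otimes> x) \<otimes> g) \<otimes> inv x"
    using g x by (simp add: m_assoc)
  also have "\<dots> = conj_elem G (g [^] Suc n) x"
    using g x by (simp add: conj_elem_def m_assoc)
  finally show ?case .
qed

lemma conj_elem_mult_telescope:
  assumes a: "a \<in> carrier G" and b: "b \<in> carrier G" and c: "c \<in> carrier G"
  shows "conj_elem G (a \<otimes> b) (b [^] Suc k) \<otimes> (b [^] k \<otimes> c) = b [^] Suc k \<otimes> (a \<otimes> c)"
proof -
  have "inv (b [^] Suc k) = inv b \<otimes> inv (b [^] k)"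
    using b by (simp add: inv_mult_group)
  then have "conj_elem G (a \<otimes> b) (b [^] Suc k) \<otimes> (b [^] k \<otimes> c)
      = b [^] Suc k \<otimes> a \<otimes> (b \<otimes> inv b) \<otimes> (inv (b [^] k) \<otimes> b [^] k) \<otimes> c"
    using a b c by (simp add: conj_elem_def m_assoc del: nat_pow_Suc)
  then show ?thesis
    using a b c by (simp add: m_assoc del: nat_pow_Suc)
qed

lemma list_prod_conj_elem_mult:
  assumes a: "a \<in> carrier G" and b: "b \<in> carrier G"
  shows "list_prod G (map (\<lambda>j. conj_elem G (a \<otimes> b) (b [^] Suc j)) (rev [0..<k]))
         = b [^] k \<otimes> a [^] k"
proof (induction k)
  case 0
  then show ?case by simp
next
  case (Suc k)
  then have "list_prod G (map (\<lambda>j. conj_elem G (a \<otimes> b) (b [^] Suc j)) (rev [0..<Suc k]))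
      = conj_elem G (a \<otimes> b) (b [^] Suc k) \<otimes> (b [^] k \<otimes> a [^] k)"
    by (simp del: nat_pow_Suc)
  also have "\<dots> = b [^] Suc k \<otimes> (a \<otimes> a [^] k)"
    using a b by (simp only: conj_elem_mult_telescope nat_pow_closed)
  also have "\<dots> = b [^] Suc k \<otimes> a [^] Suc k"
    by (simp only: nat_pow_Suc2[OF a])
  finally show ?case .
qed

lemma gen_torsion_elem_mult:
  assumes a: "a \<in> carrier G" and b: "b \<in> carrier G" and "a \<otimes> b \<noteq> \<one>"
    and "k > 0" and "a [^] (k::nat) = \<one>" and "b [^] k = \<one>"
  shows "gen_torsion_elem G (a \<otimes> b)"
  unfolding gen_torsion_elem_def
proof (intro conjI exI)
  let ?xs = "map (\<lambda>j. b [^] Suc j) (rev [0..<k])"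
  show "length ?xs > 0" "set ?xs \<subseteq> carrier G"
    using assms by auto
  have "list_prod G (map (conj_elem G (a \<otimes> b)) ?xs) = b [^] k \<otimes> a [^] k"
    using list_prod_conj_elem_mult[OF a b] by (simp add: comp_def)
  then show "list_prod G (map (conj_elem G (a \<otimes> b)) ?xs) = \<one>"
    using assms by simp
qed (use assms in auto)

lemma torsion_elemE:
  assumes "torsion_elem G g"
  obtains n :: nat where "g \<in> carrier G" "n > 0" "g [^] n = \<one>"
  using assms by (auto simp: torsion_elem_def)

lemma torsion_elem_common_exponent:
  assumes "torsion_elem G a" and "torsion_elem G b"
  obtains k :: nat where "k > 0" "a [^] k = \<one>" "b [^] k = \<one>"
proof -
  obtain m :: nat where a: "a \<in> carrier G" "m > 0" "a [^] m = \<one>"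
    using assms(1) by (rule torsion_elemE)
  obtain n :: nat where b: "b \<in> carrier G" "n > 0" "b [^] n = \<one>"
    using assms(2) by (rule torsion_elemE)
  have "a [^] (m * n) = \<one>" "b [^] (n * m) = \<one>"
    using a b by (simp_all add: nat_pow_pow[symmetric])
  then show ?thesis
    using a b by (intro that[of "m * n"]) (simp_all add: mult.commute)
qed

lemma Tor_subset_carrier: "Tor G \<subseteq> carrier G"
  by (auto simp: Tor_def torsion_elem_def)

lemma one_in_Tor: "\<one> \<in> Tor G"
  by (auto simp: Tor_def torsion_elem_def intro: exI[of _ 1])

lemma inv_in_Tor: "g \<in> Tor G \<Longrightarrow> inv g \<in> Tor G"
  by (auto simp: Tor_def torsion_elem_def nat_pow_inv)

lemma Tor_normal_iff_subgroup: "Tor G \<lhd> G \<longleftrightarrow> subgroup (Tor G) G"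
proof -
  have "x \<otimes> g \<otimes> inv x \<in> Tor G" if "x \<in> carrier G" "g \<in> Tor G" for x g
    using that conj_elem_nat_pow[of g x]
    by (auto simp: Tor_def torsion_elem_def) (auto simp: conj_elem_def)
  then show ?thesis
    by (auto simp: normal_inv_iff)
qed

lemma mult_in_Tor_if_TR_star:
  assumes TR: "TR_star_group G" and a: "a \<in> Tor G" and b: "b \<in> Tor G"
  shows "a \<otimes> b \<in> Tor G"
proof (cases "a \<otimes> b = \<one>")
  case True
  then show ?thesis using one_in_Tor by simp
next
  case False
  have "torsion_elem G a" "torsion_elem G b"
    using a b by (simp_all add: Tor_def)
  then obtain k :: nat where "k > 0" "a [^] k = \<one>" "b [^] k = \<one>"
    by (rule torsion_elem_common_exponent)
  moreover have "a \<in> carrier G" "b \<in> carrier G"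
    using a b Tor_subset_carrier by auto
  ultimately have "gen_torsion_elem G (a \<otimes> b)"
    using False by (intro gen_torsion_elem_mult)
  then show ?thesis
    using TR by (simp add: TR_star_group_def Tor_def)
qed

lemma subgroup_Tor_if_TR_star: "TR_star_group G \<Longrightarrow> subgroup (Tor G) G"
  using Tor_subset_carrier one_in_Tor inv_in_Tor mult_in_Tor_if_TR_star
  by (intro subgroupI) auto

end

theorem corollary2p2:
  fixes G :: "('a, 'b) monoid_scheme"
  assumes "group G" and "TR_star_group G"
  shows "Tor G \<lhd> G"
  using group.Tor_normal_iff_subgroup[OF assms(1)] group.subgroup_Tor_if_TR_star[OF assms]
  by simp

end
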